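(* Assume (A1), (A2) and (A4). Let $\theta'\in(\underline{\theta},\overline{\theta}]$ and let $F_{\theta'}$ be the distribution $F$ conditional on $\theta\in[\underline{\theta},\theta']$. Suppose each type $\theta$ values the good at $\overline{u}(\theta)=v(x^e(\theta))+\theta x^e(\theta)$ (i.e., consumes its efficient quantity $x^e(\theta)$), and the seller charges a single uniform price $p$, selling to exactly the types with $\overline{u}(\theta)\ge p$. Then the revenue $p\cdot\Pr_{F_{\theta'}}(\overline{u}(\theta)\ge p)$ is maximized at $p=\overline{u}(\underline{\theta})$.
   Context: Fix $\underline{\theta}<\overline{\theta}$ and $\overline{x}>0$. The buyer's type $\theta\in[\underline{\theta},\overline{\theta}]$ has CDF $F$ with density $f$. (A1): $v:[0,\overline{x}]\to\mathbb{R}$ strictly concave, continuously differentiable, $v(0)=0$. $x^e(\theta)$ is the unique maximizer of $v(x')+\theta x'$ over $x'\in[0,\overline{x}]$. (A2): $0<m\le f\le M$ for constants $m,M$, and $\theta-\frac{1-F(\theta)}{f(\theta)}$ strictly increasing. (A4): $v(x^e(\theta))+\big(\theta-\frac{1-F(\theta)}{f(\theta)}\big)x^e(\theta)\ge0$ for all $\theta$. *)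

theory Defs
  imports "HOL-Analysis.Analysis"
begin

definition strict_concave_on :: "real set \<Rightarrow> (real \<Rightarrow> real) \<Rightarrow> bool" where
  "strict_concave_on S v \<longleftrightarrow>
     (\<forall>x\<in>S. \<forall>y\<in>S. x \<noteq> y \<longrightarrow> (\<forall>t::real. 0 < t \<and> t < 1 \<longrightarrow>
        t * v x + (1 - t) * v y < v (t * x + (1 - t) * y)))"

definition xe :: "(real \<Rightarrow> real) \<Rightarrow> real \<Rightarrow> real \<Rightarrow> real" where
  "xe v xbar \<theta> = (THE x. x \<in> {0..xbar} \<and>
       (\<forall>x'\<in>{0..xbar}. v x' + \<theta> * x' \<le> v x + \<theta> * x))"

definition ubar :: "(real \<Rightarrow> real) \<Rightarrow> real \<Rightarrow> real \<Rightarrow> real" where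
  "ubar v xbar \<theta> = v (xe v xbar \<theta>) + \<theta> * xe v xbar \<theta>"

text \<open>Revenue from uniform price p, types distributed with density f on [thl, th'],
  conditioned on theta in [thl, th'] (F th' = integral of f over [thl, th']).\<close>
definition revenue :: "(real \<Rightarrow> real) \<Rightarrow> real \<Rightarrow> (real \<Rightarrow> real) \<Rightarrow> real \<Rightarrow> real \<Rightarrow> real \<Rightarrow> real" where
  "revenue v xbar f thl th' p =
     p * (integral {\<theta> \<in> {thl..th'}. ubar v xbar \<theta> \<ge> p} f / integral {thl..th'} f)"

end

theory Submission
  imports Defs
begin

text \<open>Revealed preference gives the envelope bounds
  \<open>(t - s) * xe s \<le> ubar t - ubar s \<le> (t - s) * xe t\<close>, so \<open>ubar\<close> is nondecreasing and
  Lipschitz. Hence the buyers at a price \<open>p > ubar thl\<close> form an interval \<open>[t, \<theta>']\<close> with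
  \<open>p \<le> ubar t\<close>, and it suffices that \<open>R t = ubar t * (F \<theta>' - F t)\<close>, the revenue of the price
  \<open>ubar t\<close> up to normalisation, is nonincreasing. Formally
  \<open>R' = xe t * (F \<theta>' - F t) - ubar t * f t \<le> xe t * (1 - F t) - ubar t * f t \<le> 0\<close> by (A4).
  As \<open>F\<close> is merely an indefinite integral, this is made rigorous by bounding the increment of \<open>R\<close>
  over \<open>[s, r]\<close> by \<open>(r - s) * (xe r - xe s) + O((r - s)\<^sup>2)\<close> and telescoping over uniform
  partitions of mesh \<open>h\<close>: the first terms sum to \<open>h * (xe t - xe thl)\<close>, the rest to \<open>O(h)\<close>.\<close>

lemma uniform_partition_increment_bound:
  fixes H X :: "real \<Rightarrow> real" and n :: nat
  assumes "a \<le> b" "0 < n"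
    and incr: "\<And>s t. a \<le> s \<Longrightarrow> s \<le> t \<Longrightarrow> t \<le> b \<Longrightarrow>
                 H t - H s \<le> (t - s) * (X t - X s + C * (t - s))"
  shows "H b - H a \<le> (b - a) / n * (X b - X a + C * (b - a))"
proof -
  define h where "h = (b - a) / n"
  define p where "p k = a + real k * h" for k
  have nh: "real n * h = b - a" and h: "0 \<le> h"
    using assms(1,2) unfolding h_def by auto
  have p_ends: "p 0 = a" "p n = b"
    using nh unfolding p_def by auto
  have grid: "a \<le> p k \<and> p k \<le> p (Suc k) \<and> p (Suc k) \<le> b" if "k < n" for k
  proof -
    have "real (Suc k) * h \<le> real n * h"
      using that h by (intro mult_right_mono) auto
    then show ?thesis
      using h nh unfolding p_def by (auto simp: algebra_simps)
  qed
  have step: "p (Suc k) - p k = h" for k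
    unfolding p_def by (simp add: algebra_simps)
  have "H b - H a = (\<Sum>k<n. H (p (Suc k)) - H (p k))"
    using sum_lessThan_telescope[of "H \<circ> p" n] p_ends by simp
  also have "\<dots> \<le> (\<Sum>k<n. h * (X (p (Suc k)) - X (p k) + C * h))"
  proof (rule sum_mono)
    fix k assume "k \<in> {..<n}"
    then show "H (p (Suc k)) - H (p k) \<le> h * (X (p (Suc k)) - X (p k) + C * h)"
      using incr[of "p k" "p (Suc k)"] grid[of k] by (simp only: step) auto
  qed
  also have "\<dots> = h * (X b - X a) + real n * h * (C * h)"
    using sum_lessThan_telescope[of "X \<circ> p" n] p_ends
    by (simp add: distrib_left sum.distrib sum_distrib_left[symmetric])
  also have "\<dots> = h * (X b - X a + C * (b - a))"
    unfolding nh by (simp add: algebra_simps)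
  finally show ?thesis
    unfolding h_def .
qed

lemma nonincreasing_if_increment_bound:
  fixes H X :: "real \<Rightarrow> real"
  assumes "a \<le> b"
    and incr: "\<And>s t. a \<le> s \<Longrightarrow> s \<le> t \<Longrightarrow> t \<le> b \<Longrightarrow>
                 H t - H s \<le> (t - s) * (X t - X s + C * (t - s))"
  shows "H b \<le> H a"
proof -
  define K where "K = X b - X a + C * (b - a)"
  have "(\<lambda>n. (b - a) / real n * K) \<longlonglongrightarrow> 0 * K"
    by (intro tendsto_intros)
  moreover have "\<forall>\<^sub>F n in sequentially. H b - H a \<le> (b - a) / real n * K"
    using eventually_gt_at_top[of 0]
    by eventually_elim (use uniform_partition_increment_bound assms in \<open>auto simp: K_def\<close>)
  ultimately have "H b - H a \<le> 0 * K"
    by (intro tendsto_le[OF sequentially_bot _ tendsto_const])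
  then show ?thesis
    by simp
qed

lemma superlevel_set_of_mono_Icc:
  fixes U :: "real \<Rightarrow> real"
  assumes "mono_on {a..b} U" "continuous_on {a..b} U"
    and "{\<theta> \<in> {a..b}. p \<le> U \<theta>} \<noteq> {}"
  obtains t where "t \<in> {a..b}" "p \<le> U t" "{\<theta> \<in> {a..b}. p \<le> U \<theta>} = {t..b}"
proof -
  let ?S = "{\<theta> \<in> {a..b}. p \<le> U \<theta>}"
  have "closed ?S"
    by (intro continuous_on_closed_Collect_le continuous_on_const assms(2) closed_atLeastAtMost)
  moreover have "bdd_below ?S"
    by (rule bdd_belowI[of _ a]) auto
  ultimately have "Inf ?S \<in> ?S"
    by (intro closed_contains_Inf assms(3))
  moreover have "?S = {Inf ?S..b}"
  proof (intro equalityI subsetI)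
    fix \<theta> assume "\<theta> \<in> ?S"
    then show "\<theta> \<in> {Inf ?S..b}"
      using cInf_lower[OF _ \<open>bdd_below ?S\<close>] by simp
  next
    fix \<theta> assume \<theta>: "\<theta> \<in> {Inf ?S..b}"
    with \<open>Inf ?S \<in> ?S\<close> have "U (Inf ?S) \<le> U \<theta>"
      by (intro mono_onD[OF assms(1)]) auto
    with \<theta> \<open>Inf ?S \<in> ?S\<close> show "\<theta> \<in> ?S"
      by auto
  qed
  ultimately show ?thesis
    using that by blast
qed

locale efficient_quantity =
  fixes v :: "real \<Rightarrow> real" and xbar :: real
  assumes xbar_nonneg: "0 \<le> xbar"
    and strict_concave: "strict_concave_on {0..xbar} v"
    and continuous_v: "continuous_on {0..xbar} v"
begin

lemma xe_maximizes:
  "xe v xbar \<theta> \<in> {0..xbar} \<and> (\<forall>x\<in>{0..xbar}. v x + \<theta> * x \<le> ubar v xbar \<theta>)"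
proof -
  let ?P = "\<lambda>x. x \<in> {0..xbar} \<and> (\<forall>x'\<in>{0..xbar}. v x' + \<theta> * x' \<le> v x + \<theta> * x)"
  have "continuous_on {0..xbar} (\<lambda>x. v x + \<theta> * x)"
    by (intro continuous_intros continuous_v)
  from continuous_attains_sup[OF compact_Icc _ this] obtain x where "?P x"
    using xbar_nonneg by auto
  moreover have "y = x" if "?P y" for y
  proof (rule ccontr)
    assume "y \<noteq> x"
    let ?mid = "(1/2) * y + (1 - 1/2) * x"
    have "?mid \<in> {0..xbar}"
      using \<open>?P x\<close> \<open>?P y\<close> by auto
    then have "v ?mid + \<theta> * ?mid \<le> v x + \<theta> * x" "v ?mid + \<theta> * ?mid \<le> v y + \<theta> * y"
      using \<open>?P x\<close> \<open>?P y\<close> by auto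
    moreover have chord: "\<forall>t. 0 < t \<and> t < 1 \<longrightarrow> t * v y + (1 - t) * v x < v (t * y + (1 - t) * x)"
      using strict_concave \<open>y \<noteq> x\<close> \<open>?P x\<close> \<open>?P y\<close> unfolding strict_concave_on_def by blast
    then have "(1/2) * v y + (1 - 1/2) * v x < v ?mid"
      using spec[OF chord, of "1/2"] by simp
    ultimately show False
      by (simp add: algebra_simps)
  qed
  ultimately have "?P (THE x. ?P x)"
    by (rule theI)
  then show ?thesis
    unfolding ubar_def xe_def .
qed

lemma xe_bounds: "0 \<le> xe v xbar \<theta>" "xe v xbar \<theta> \<le> xbar"
  using xe_maximizes by auto

lemma ubar_ge: "x \<in> {0..xbar} \<Longrightarrow> v x + \<theta> * x \<le> ubar v xbar \<theta>"
  using xe_maximizes by blast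

lemma ubar_diff_ge: "(t - s) * xe v xbar s \<le> ubar v xbar t - ubar v xbar s"
  using ubar_ge[OF xe_maximizes[THEN conjunct1], of s t]
  unfolding ubar_def by (simp add: algebra_simps)

lemma ubar_diff_le: "ubar v xbar t - ubar v xbar s \<le> (t - s) * xe v xbar t"
  using ubar_ge[OF xe_maximizes[THEN conjunct1], of t s]
  unfolding ubar_def by (simp add: algebra_simps)

lemma xe_mono:
  assumes "s \<le> t" shows "xe v xbar s \<le> xe v xbar t"
proof (cases "s = t")
  case False
  have "(t - s) * xe v xbar s \<le> (t - s) * xe v xbar t"
    using ubar_diff_ge[of t s] ubar_diff_le[of t s] by linarith
  then show ?thesis
    using assms False by simp
qed simp

lemma ubar_mono: "s \<le> t \<Longrightarrow> ubar v xbar s \<le> ubar v xbar t"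
  using ubar_diff_ge[of t s] mult_nonneg_nonneg[OF _ xe_bounds(1), of "t - s" s] by linarith

lemma ubar_diff_le_xbar: "s \<le> t \<Longrightarrow> ubar v xbar t - ubar v xbar s \<le> (t - s) * xbar"
  using ubar_diff_le[of t s] mult_left_mono[OF xe_bounds(2), of "t - s" t] by linarith

lemma ubar_nonneg: "v 0 = 0 \<Longrightarrow> 0 \<le> ubar v xbar \<theta>"
  using ubar_ge[of 0 \<theta>] xbar_nonneg by simp

lemma continuous_on_ubar: "continuous_on A (ubar v xbar)"
proof -
  have "dist (ubar v xbar t) (ubar v xbar s) \<le> xbar * dist t s" for s t
    using ubar_diff_le_xbar[of s t] ubar_diff_le_xbar[of t s] ubar_mono[of s t] ubar_mono[of t s]
    by (cases "s \<le> t") (auto simp: dist_real_def algebra_simps)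
  then have "xbar-lipschitz_on A (ubar v xbar)"
    using xbar_nonneg by (intro lipschitz_onI) auto
  then show ?thesis
    by (rule lipschitz_on_continuous_on)
qed

end

locale uniform_pricing = efficient_quantity +
  fixes f F :: "real \<Rightarrow> real" and thl thh M :: real
  assumes v_zero: "v 0 = 0"
    and thl_le_thh: "thl \<le> thh"
    and f_integrable: "f integrable_on {thl..thh}"
    and F_eq: "\<And>\<theta>. \<theta> \<in> {thl..thh} \<Longrightarrow> F \<theta> = integral {thl..\<theta>} f"
    and F_thh: "F thh = 1"
    and f_nonneg: "\<And>\<theta>. \<theta> \<in> {thl..thh} \<Longrightarrow> 0 \<le> f \<theta>"
    and f_le: "\<And>\<theta>. \<theta> \<in> {thl..thh} \<Longrightarrow> f \<theta> \<le> M"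
    and virtual_surplus_nonneg:
      "\<And>\<theta>. \<theta> \<in> {thl..thh} \<Longrightarrow> xe v xbar \<theta> * (1 - F \<theta>) \<le> ubar v xbar \<theta> * f \<theta>"
begin

lemma f_integrable_on: "thl \<le> s \<Longrightarrow> t \<le> thh \<Longrightarrow> f integrable_on {s..t}"
  using integrable_subinterval_real[OF f_integrable] by simp

lemma F_diff: "thl \<le> s \<Longrightarrow> s \<le> t \<Longrightarrow> t \<le> thh \<Longrightarrow> F t - F s = integral {s..t} f"
  using Henstock_Kurzweil_Integration.integral_combine[of thl s t f] f_integrable_on[of thl t] F_eq
  by simp

lemma integral_f_bounds:
  assumes "thl \<le> s" "s \<le> t" "t \<le> thh"
  shows "0 \<le> integral {s..t} f" "integral {s..t} f \<le> M * (t - s)"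
proof -
  show "0 \<le> integral {s..t} f"
    using assms f_integrable_on f_nonneg by (intro Henstock_Kurzweil_Integration.integral_nonneg) auto
  have "integral {s..t} f \<le> integral {s..t} (\<lambda>_. M)"
    using assms f_integrable_on f_le by (intro integral_le) auto
  then show "integral {s..t} f \<le> M * (t - s)"
    using assms by (simp add: mult.commute)
qed

lemma F_thl: "F thl = 0"
  using F_eq[of thl] thl_le_thh by simp

lemma F_mono:
  assumes "thl \<le> s" "s \<le> t" "t \<le> thh" shows "F s \<le> F t"
  using F_diff[OF assms] integral_f_bounds(1)[OF assms] by linarith

lemma F_le_1: "\<theta> \<in> {thl..thh} \<Longrightarrow> F \<theta> \<le> 1"
  using F_mono[of \<theta> thh] F_thh by simp

text \<open>Unnormalised revenue of the price \<open>ubar v xbar \<theta>\<close> when types are truncated at \<open>b\<close>: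
  exactly the types in \<open>[\<theta>, b]\<close> buy.\<close>

definition cutoff_revenue :: "real \<Rightarrow> real \<Rightarrow> real" where
  "cutoff_revenue b \<theta> = ubar v xbar \<theta> * (F b - F \<theta>)"

lemma ubar_mul_integral_ge:
  assumes "thl \<le> s" "s \<le> r" "r \<le> b" "b \<le> thh"
  shows "(r - s) * (xe v xbar s * (F b - F r)) \<le> ubar v xbar r * integral {s..r} f"
proof -
  let ?U = "ubar v xbar" and ?X = "xe v xbar" and ?G = "F b - F r"
  have "integral {s..r} (\<lambda>_. ?X s * ?G) \<le> integral {s..r} (\<lambda>\<theta>. ?U r * f \<theta>)"
  proof (rule integral_le)
    show "(\<lambda>\<theta>. ?U r * f \<theta>) integrable_on {s..r}"
      using integrable_on_cmult_left[OF f_integrable_on, of s r "?U r"] assms by simp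
    fix \<theta> assume \<theta>: "\<theta> \<in> {s..r}"
    then have \<theta>_in: "\<theta> \<in> {thl..thh}"
      using assms by auto
    have "?X s * ?G \<le> ?X \<theta> * (1 - F \<theta>)"
      using \<theta> xe_mono[of s \<theta>] xe_bounds(1)[of \<theta>] F_mono[of \<theta> r] F_mono[of r b] F_le_1[of b] assms
      by (intro mult_mono) auto
    also have "\<dots> \<le> ?U \<theta> * f \<theta>"
      using virtual_surplus_nonneg[OF \<theta>_in] .
    also have "\<dots> \<le> ?U r * f \<theta>"
      using \<theta> ubar_mono[of \<theta> r] f_nonneg[OF \<theta>_in] by (intro mult_right_mono) auto
    finally show "?X s * ?G \<le> ?U r * f \<theta>" .
  qed auto
  moreover have "integral {s..r} (\<lambda>_. ?X s * ?G) = (r - s) * (?X s * ?G)"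
    using assms by simp
  moreover have "integral {s..r} (\<lambda>\<theta>. ?U r * f \<theta>) = ?U r * integral {s..r} f"
    by simp
  ultimately show ?thesis
    by linarith
qed

lemma cutoff_revenue_increment_bound:
  assumes "thl \<le> s" "s \<le> r" "r \<le> b" "b \<le> thh"
  shows "cutoff_revenue b r - cutoff_revenue b s
           \<le> (r - s) * (xe v xbar r - xe v xbar s + xbar * M * (r - s))"
proof -
  let ?U = "ubar v xbar" and ?X = "xe v xbar"
  define I where "I = integral {s..r} f"
  define G where "G = F b - F r"
  have F_s: "F b - F s = G + I"
    using F_diff[of s r] assms unfolding G_def I_def by simp
  have G: "0 \<le> G" "G \<le> 1"
    using F_mono[of r b] F_mono[of thl r] F_thl F_le_1[of b] assms unfolding G_def by auto
  have I: "0 \<le> I" "I \<le> M * (r - s)"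
    using integral_f_bounds[of s r] assms unfolding I_def by auto
  have X_mono: "0 \<le> ?X r - ?X s"
    using xe_mono[OF \<open>s \<le> r\<close>] by simp
  have sold: "(r - s) * (?X s * G) \<le> ?U r * I"
    using ubar_mul_integral_ge[OF assms] unfolding G_def I_def .
  have "(?U r - ?U s) * I \<le> ((r - s) * xbar) * (M * (r - s))"
    using ubar_diff_le_xbar[OF \<open>s \<le> r\<close>] ubar_mono[OF \<open>s \<le> r\<close>] I by (intro mult_mono) auto
  moreover have "(?U r - ?U s) * G \<le> ((r - s) * ?X r) * G"
    using ubar_diff_le[of r s] G by (intro mult_right_mono)
  ultimately have "cutoff_revenue b r - cutoff_revenue b s
      \<le> ((r - s) * xbar) * (M * (r - s)) + ((r - s) * ?X r) * G - (r - s) * (?X s * G)"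
    using sold unfolding cutoff_revenue_def F_s G_def[symmetric] by (simp add: algebra_simps)
  also have "\<dots> = (r - s) * (?X r - ?X s) * G + (r - s) * (xbar * M * (r - s))"
    by (simp add: algebra_simps)
  also have "\<dots> \<le> (r - s) * (?X r - ?X s) + (r - s) * (xbar * M * (r - s))"
    using G X_mono assms by (simp add: mult_left_le)
  finally show ?thesis
    by (simp add: algebra_simps)
qed

lemma cutoff_revenue_antimono:
  assumes "thl \<le> t" "t \<le> b" "b \<le> thh"
  shows "cutoff_revenue b t \<le> cutoff_revenue b thl"
proof (rule nonincreasing_if_increment_bound[of thl t "cutoff_revenue b" "xe v xbar" "xbar * M"])
  fix s r assume "thl \<le> s" "s \<le> r" "r \<le> t"
  with assms show "cutoff_revenue b r - cutoff_revenue b s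
                     \<le> (r - s) * (xe v xbar r - xe v xbar s + xbar * M * (r - s))"
    by (intro cutoff_revenue_increment_bound) auto
qed (rule assms(1))

theorem revenue_maximized_at_ubar_thl:
  assumes "thl \<le> b" "b \<le> thh"
  shows "revenue v xbar f thl b p \<le> revenue v xbar f thl b (ubar v xbar thl)"
proof -
  let ?U = "ubar v xbar"
  let ?S = "\<lambda>q. {\<theta> \<in> {thl..b}. q \<le> ?U \<theta>}"
  have mass: "integral {thl..b} f = F b"
    using F_eq assms by simp
  have "0 \<le> F b"
    using F_mono[of thl b] F_thl assms by simp
  then consider "F b = 0" | "0 < F b"
    by linarith
  then show ?thesis
  proof cases
    case 1
    then show ?thesis
      unfolding revenue_def mass by simp
  next
    case F_pos: 2
    have "?S (?U thl) = {thl..b}"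
      using ubar_mono by auto
    then have top: "revenue v xbar f thl b (?U thl) = ?U thl"
      using F_pos by (simp add: revenue_def mass)
    show ?thesis
    proof (cases "?S p = {}")
      case True
      have "revenue v xbar f thl b p = 0"
        unfolding revenue_def True by simp
      then show ?thesis
        unfolding top using ubar_nonneg[OF v_zero] by simp
    next
      case False
      moreover have "mono_on {thl..b} ?U"
        using ubar_mono by (auto intro: mono_onI)
      ultimately obtain t where t: "t \<in> {thl..b}" "p \<le> ?U t" "?S p = {t..b}"
        using superlevel_set_of_mono_Icc continuous_on_ubar by blast
      have "integral (?S p) f = F b - F t"
        using F_diff[of t b] t assms unfolding t(3) by simp
      moreover have "p * (F b - F t) \<le> ?U thl * F b"
      proof -
        have "p * (F b - F t) \<le> cutoff_revenue b t"
          using t F_mono[of t b] assms unfolding cutoff_revenue_def by (intro mult_right_mono) auto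
        also have "\<dots> \<le> cutoff_revenue b thl"
          using cutoff_revenue_antimono t assms by simp
        finally show ?thesis
          unfolding cutoff_revenue_def F_thl by simp
      qed
      ultimately have "revenue v xbar f thl b p \<le> ?U thl"
        unfolding revenue_def mass using F_pos by (simp add: divide_le_eq)
      then show ?thesis
        unfolding top .
    qed
  qed
qed

end

theorem lemma6:
  fixes v f F :: "real \<Rightarrow> real" and thl thh xbar th' m M :: real
  assumes thl_thh: "thl < thh" and xbar_pos: "xbar > 0"
    \<comment> \<open>(A1)\<close>
    and v_concave: "strict_concave_on {0..xbar} v"
    and v_C1: "\<exists>v'. (\<forall>x\<in>{0..xbar}. (v has_real_derivative v' x) (at x within {0..xbar}))
                    \<and> continuous_on {0..xbar} v'"
    and v0: "v 0 = 0"
    \<comment> \<open>F is the CDF on [thl, thh] with density f\<close>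
    and f_int: "f integrable_on {thl..thh}"
    and F_def: "\<forall>\<theta>\<in>{thl..thh}. F \<theta> = integral {thl..\<theta>} f"
    and F_top: "F thh = 1"
    \<comment> \<open>(A2)\<close>
    and m_pos: "0 < m" and f_bounds: "\<forall>\<theta>\<in>{thl..thh}. m \<le> f \<theta> \<and> f \<theta> \<le> M"
    and virt_mono: "strict_mono_on {thl..thh} (\<lambda>\<theta>. \<theta> - (1 - F \<theta>) / f \<theta>)"
    \<comment> \<open>(A4)\<close>
    and A4: "\<forall>\<theta>\<in>{thl..thh}. v (xe v xbar \<theta>) + (\<theta> - (1 - F \<theta>) / f \<theta>) * xe v xbar \<theta> \<ge> 0"
    \<comment> \<open>truncation point\<close>
    and th'_range: "th' \<in> {thl<..thh}"
  shows "\<forall>p::real. revenue v xbar f thl th' p \<le> revenue v xbar f thl th' (ubar v xbar thl)"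
proof -
  txt \<open>The monotonicity of the virtual value is not needed; the lower density bound \<open>m\<close>
    only serves to clear the denominator in (A4).\<close>
  obtain v' where "\<forall>x\<in>{0..xbar}. (v has_real_derivative v' x) (at x within {0..xbar})"
    using v_C1 by blast
  then have v_continuous: "continuous_on {0..xbar} v"
    by (intro DERIV_continuous_on) blast
  have f_pos: "0 < f \<theta>" if "\<theta> \<in> {thl..thh}" for \<theta>
    using f_bounds m_pos that by (meson less_le_trans)
  have virtual_surplus: "xe v xbar \<theta> * (1 - F \<theta>) \<le> ubar v xbar \<theta> * f \<theta>"
    if "\<theta> \<in> {thl..thh}" for \<theta>
  proof -
    have "(1 - F \<theta>) / f \<theta> * xe v xbar \<theta> \<le> ubar v xbar \<theta>"
      using A4 that unfolding ubar_def by (simp add: algebra_simps)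
    then show ?thesis
      using f_pos[OF that] by (simp add: field_simps)
  qed
  interpret uniform_pricing v xbar f F thl thh M
    using xbar_pos v_concave v_continuous v0 thl_thh f_int F_def F_top f_bounds virtual_surplus
      f_pos[THEN less_imp_le]
    by unfold_locales auto
  show ?thesis
    using th'_range by (intro allI revenue_maximized_at_ubar_thl) auto
qed

end
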